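(* Let $\alpha_1,\alpha_2,\alpha_3\in\mathbb{Z}$ with $\alpha_1\ge\alpha_2\ge0\ge\alpha_3$, and put $b=-\alpha_1-\alpha_2-\alpha_3$, $c=\alpha_1\alpha_2+\alpha_1\alpha_3+\alpha_2\alpha_3$, $c_1=-\alpha_1\alpha_2\alpha_3$. Let $a_1>a_2>0$ be real numbers and set $$P=a_1^3a_2^2+a_1^2a_2^3+(a_1^2a_2+a_1a_2^2)bc_1+(a_1^2+a_2^2)c_1^2+2a_1^2a_2^2c.$$ Then the two inequalities $$P\le0\quad\text{and}\quad P^2-(a_1-a_2)^2\bigl((a_1+a_2)c_1^2-a_1^2a_2^2+a_1a_2bc_1\bigr)^2\ge0$$ hold simultaneously if and only if $-\alpha_2\alpha_3\le a_2<a_1\le-\alpha_1\alpha_3$. *)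

theory Defs
  imports Complex_Main
begin

end

theory Submission
  imports Defs
begin

text \<open>With \<open>G(z) = z\<^sup>3 + c z\<^sup>2 + b c\<^sub>1 z + c\<^sub>1\<^sup>2\<close>, whose roots are
  \<open>-\<alpha>\<^sub>2\<alpha>\<^sub>3 \<le> -\<alpha>\<^sub>1\<alpha>\<^sub>3\<close> and \<open>-\<alpha>\<^sub>1\<alpha>\<^sub>2 \<le> 0\<close>, one has
  \<open>P = X + Y\<close> for \<open>X = a\<^sub>2\<^sup>2 G(a\<^sub>1)\<close>, \<open>Y = a\<^sub>1\<^sup>2 G(a\<^sub>2)\<close>, and the second
  quantity is \<open>(X + Y)\<^sup>2 - (X - Y)\<^sup>2 = 4XY\<close>. Now \<open>X + Y \<le> 0 \<and> XY \<ge> 0\<close> says that both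
  \<open>G(a\<^sub>1)\<close> and \<open>G(a\<^sub>2)\<close> are nonpositive, and on the positive axis \<open>G\<close> is
  nonpositive exactly between its two positive roots.\<close>

definition pair_product_cubic :: "real \<Rightarrow> real \<Rightarrow> real \<Rightarrow> real \<Rightarrow> real" where
  "pair_product_cubic b c c1 z = z^3 + c * z^2 + b * c1 * z + c1^2"

lemma pair_product_cubic_factor:
  "pair_product_cubic (- p - q - w) (p * q + p * w + q * w) (- (p * q * w)) z
     = (z + q * w) * (z + p * w) * (z + p * q)"
  unfolding pair_product_cubic_def by (simp add: algebra_simps power2_eq_square power3_eq_cube)

lemma sum_weighted_pair_product_cubic:
  "a1^3 * a2^2 + a1^2 * a2^3 + (a1^2 * a2 + a1 * a2^2) * b * c1
     + (a1^2 + a2^2) * c1^2 + 2 * a1^2 * a2^2 * c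
   = a2^2 * pair_product_cubic b c c1 a1 + a1^2 * pair_product_cubic b c c1 a2"
  unfolding pair_product_cubic_def by (simp add: algebra_simps power2_eq_square power3_eq_cube)

lemma diff_weighted_pair_product_cubic:
  "a2^2 * pair_product_cubic b c c1 a1 - a1^2 * pair_product_cubic b c c1 a2
   = - (a1 - a2) * ((a1 + a2) * c1^2 - a1^2 * a2^2 + a1 * a2 * b * c1)"
  unfolding pair_product_cubic_def by (simp add: algebra_simps power2_eq_square power3_eq_cube)

lemma square_sum_minus_square_diff:
  fixes x y :: "'a::comm_ring_1"
  shows "(x + y)^2 - (x - y)^2 = 4 * (x * y)"
  by (simp add: algebra_simps power2_eq_square)

lemma sum_nonpos_and_prod_nonneg_iff:
  fixes x y :: "'a::linordered_idom"
  shows "(x + y \<le> 0 \<and> 0 \<le> x * y) \<longleftrightarrow> x \<le> 0 \<and> y \<le> 0"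
  by (auto simp: zero_le_mult_iff add_nonpos_nonpos)

lemma cubic_nonpos_between_roots:
  fixes z s t r :: "'a::linordered_idom"
  assumes "z > 0" "r \<ge> 0" "s \<le> t"
  shows "(z - s) * (z - t) * (z + r) \<le> 0 \<longleftrightarrow> s \<le> z \<and> z \<le> t"
proof -
  have "(z - s) * (z - t) * (z + r) \<le> 0 \<longleftrightarrow> (z - s) * (z - t) \<le> 0"
    using assms by (simp add: mult_le_0_iff)
  also have "\<dots> \<longleftrightarrow> s \<le> z \<and> z \<le> t"
    using assms(3) by (auto simp: mult_le_0_iff)
  finally show ?thesis .
qed

lemma P_inequalities_iff_pair_product_cubic_nonpos:
  fixes a1 a2 b c c1 :: real
  assumes "a1 \<noteq> 0" "a2 \<noteq> 0"
  defines "P \<equiv> a1^3 * a2^2 + a1^2 * a2^3 + (a1^2 * a2 + a1 * a2^2) * b * c1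
                 + (a1^2 + a2^2) * c1^2 + 2 * a1^2 * a2^2 * c"
  shows "(P \<le> 0 \<and> P^2 - (a1 - a2)^2 * ((a1 + a2) * c1^2 - a1^2 * a2^2 + a1 * a2 * b * c1)^2 \<ge> 0)
         \<longleftrightarrow> pair_product_cubic b c c1 a1 \<le> 0 \<and> pair_product_cubic b c c1 a2 \<le> 0"
proof -
  define X Y where "X = a2^2 * pair_product_cubic b c c1 a1"
    and "Y = a1^2 * pair_product_cubic b c c1 a2"
  have P_eq: "P = X + Y"
    unfolding P_def X_def Y_def by (rule sum_weighted_pair_product_cubic)
  have "(a1 - a2)^2 * ((a1 + a2) * c1^2 - a1^2 * a2^2 + a1 * a2 * b * c1)^2 = (X - Y)^2"
    unfolding X_def Y_def diff_weighted_pair_product_cubic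
    by (simp add: power2_eq_square algebra_simps)
  then have discr_eq: "P^2 - (a1 - a2)^2 * ((a1 + a2) * c1^2 - a1^2 * a2^2 + a1 * a2 * b * c1)^2
      = 4 * (X * Y)"
    by (simp add: P_eq square_sum_minus_square_diff)
  have "X \<le> 0 \<longleftrightarrow> pair_product_cubic b c c1 a1 \<le> 0"
    and "Y \<le> 0 \<longleftrightarrow> pair_product_cubic b c c1 a2 \<le> 0"
    using assms by (simp_all add: X_def Y_def mult_le_0_iff)
  then show ?thesis
    using sum_nonpos_and_prod_nonneg_iff[of X Y] unfolding discr_eq by (simp add: P_eq)
qed

theorem lemma2:
  fixes \<alpha>1 \<alpha>2 \<alpha>3 :: int and a1 a2 :: real
  assumes "\<alpha>1 \<ge> \<alpha>2" and "\<alpha>2 \<ge> 0" and "0 \<ge> \<alpha>3"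
    and "a1 > a2" and "a2 > 0"
  shows "let b = real_of_int (- \<alpha>1 - \<alpha>2 - \<alpha>3);
             c = real_of_int (\<alpha>1 * \<alpha>2 + \<alpha>1 * \<alpha>3 + \<alpha>2 * \<alpha>3);
             c1 = real_of_int (- \<alpha>1 * \<alpha>2 * \<alpha>3);
             P = a1^3 * a2^2 + a1^2 * a2^3 + (a1^2 * a2 + a1 * a2^2) * b * c1
                 + (a1^2 + a2^2) * c1^2 + 2 * a1^2 * a2^2 * c
         in (P \<le> 0 \<and>
             P^2 - (a1 - a2)^2 * ((a1 + a2) * c1^2 - a1^2 * a2^2 + a1 * a2 * b * c1)^2 \<ge> 0)
            \<longleftrightarrow> (real_of_int (- \<alpha>2 * \<alpha>3) \<le> a2 \<and> a2 < a1 \<and> a1 \<le> real_of_int (- \<alpha>1 * \<alpha>3))"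
proof -
  define p q w where "p = real_of_int \<alpha>1" and "q = real_of_int \<alpha>2" and "w = real_of_int \<alpha>3"
  define G where "G = pair_product_cubic (- p - q - w) (p * q + p * w + q * w) (- (p * q * w))"
  have "p \<ge> q" "q \<ge> 0" "w \<le> 0"
    using assms unfolding p_def q_def w_def by auto
  then have roots: "p * q \<ge> 0" "- q * w \<le> - p * w"
    by (simp_all add: mult_right_mono_neg)
  have G_nonpos_iff: "G z \<le> 0 \<longleftrightarrow> - q * w \<le> z \<and> z \<le> - p * w" if "z > 0" for z
    using cubic_nonpos_between_roots[OF that roots]
    by (simp add: G_def pair_product_cubic_factor)
  have "real_of_int (- \<alpha>1 - \<alpha>2 - \<alpha>3) = - p - q - w"
    and "real_of_int (\<alpha>1 * \<alpha>2 + \<alpha>1 * \<alpha>3 + \<alpha>2 * \<alpha>3) = p * q + p * w + q * w"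
    and "real_of_int (- \<alpha>1 * \<alpha>2 * \<alpha>3) = - (p * q * w)"
    and "real_of_int (- \<alpha>2 * \<alpha>3) = - q * w" and "real_of_int (- \<alpha>1 * \<alpha>3) = - p * w"
    unfolding p_def q_def w_def by simp_all
  with assms G_nonpos_iff[of a1] G_nonpos_iff[of a2] show ?thesis
    unfolding Let_def
    by (simp only: P_inequalities_iff_pair_product_cubic_nonpos G_def[symmetric]) auto
qed

end
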